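(* Let $L\ge1$ and let $U\in\mathcal{U}$ satisfy $\operatorname{ind}(U)=0$ and $\operatorname{prop}(U)\le L$. Then there exist $V\in\mathrm{U}(B_0(2L))$ and $W\in\mathrm{U}(B_{-L}(2L))$ with $U=VW$.
   Context: Let $\ell^2(\mathbb{C})$ be the Hilbert space of square-summable complex sequences indexed by $\mathbb{Z}$, with standard orthonormal basis $\{e_i\}_{i\in\mathbb{Z}}$, and $\mathcal{B}$ the algebra of bounded operators on it. Each $T\in\mathcal{B}$ has matrix entries $T_{ij}=\langle e_i,Te_j\rangle$. The propagation is $\operatorname{prop}(T)=\sup\{|i-j|: T_{ij}\ne0\}$, and $\mathcal{U}$ denotes the set of unitary operators in $\mathcal{B}$ of finite propagation. The index of $U\in\mathcal{U}$ is $\operatorname{ind}(U)=\sum_{i<0,\,j\ge0}|U_{ij}|^2-\sum_{i\ge0,\,j<0}|U_{ij}|^2$ (a finite sum). For $k\in\mathbb{Z}$ and $M\ge1$, $B_k(M)=\{T\in\mathcal{B}: T_{ij}=0 \text{ unless } k+nM\le i,j<k+(n+1)M\text{ for some }n\in\mathbb{Z}\}$ is the algebra of block-diagonal operators with blocks of size $M$ starting at $k$, and $\mathrm{U}(B_k(M))$ is its group of unitary elements. *)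

theory Defs
  imports "HOL-Analysis.Analysis"
begin

text \<open>Operators on l2(Z) are represented by their matrices T i j = <e_i, T e_j>.\<close>

type_synonym zmat = "int \<Rightarrow> int \<Rightarrow> complex"

definition is_l2 :: "(int \<Rightarrow> complex) \<Rightarrow> bool" where
  "is_l2 x \<longleftrightarrow> (\<lambda>j. (cmod (x j))\<^sup>2) summable_on UNIV"

definition l2norm2 :: "(int \<Rightarrow> complex) \<Rightarrow> real" where
  "l2norm2 x = (\<Sum>\<^sub>\<infinity>j. (cmod (x j))\<^sup>2)"

definition apply_mat :: "zmat \<Rightarrow> (int \<Rightarrow> complex) \<Rightarrow> (int \<Rightarrow> complex)" where
  "apply_mat T x = (\<lambda>i. \<Sum>\<^sub>\<infinity>j. T i j * x j)"

definition bounded_op :: "zmat \<Rightarrow> bool" where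
  "bounded_op T \<longleftrightarrow> (\<exists>C. \<forall>x. is_l2 x \<longrightarrow>
      (\<forall>i. (\<lambda>j. T i j * x j) summable_on UNIV) \<and>
      is_l2 (apply_mat T x) \<and> l2norm2 (apply_mat T x) \<le> C * l2norm2 x)"

definition mmult :: "zmat \<Rightarrow> zmat \<Rightarrow> zmat" where
  "mmult A B = (\<lambda>i j. \<Sum>\<^sub>\<infinity>k. A i k * B k j)"

definition adj :: "zmat \<Rightarrow> zmat" where
  "adj T = (\<lambda>i j. cnj (T j i))"

definition idm :: zmat where
  "idm = (\<lambda>i j. if i = j then 1 else 0)"

definition unitary_op :: "zmat \<Rightarrow> bool" where
  "unitary_op T \<longleftrightarrow> bounded_op T \<and> mmult T (adj T) = idm \<and> mmult (adj T) T = idm"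

definition prop_le :: "zmat \<Rightarrow> int \<Rightarrow> bool" where
  "prop_le T L \<longleftrightarrow> (\<forall>i j. T i j \<noteq> 0 \<longrightarrow> \<bar>i - j\<bar> \<le> L)"

definition fp_unitaries :: "zmat set" where
  "fp_unitaries = {U. unitary_op U \<and> (\<exists>L. prop_le U L)}"

definition ind :: "zmat \<Rightarrow> real" where
  "ind U = (\<Sum>\<^sub>\<infinity>(i,j)\<in>{(i,j). i < 0 \<and> j \<ge> 0}. (cmod (U i j))\<^sup>2)
         - (\<Sum>\<^sub>\<infinity>(i,j)\<in>{(i,j). i \<ge> 0 \<and> j < 0}. (cmod (U i j))\<^sup>2)"

definition block_diag :: "int \<Rightarrow> int \<Rightarrow> zmat set" where
  "block_diag k M = {T. bounded_op T \<and>
     (\<forall>i j. T i j \<noteq> 0 \<longrightarrow> (\<exists>n::int. k + n*M \<le> i \<and> i < k + (n+1)*M \<and>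
                                     k + n*M \<le> j \<and> j < k + (n+1)*M))}"

definition unitary_block :: "int \<Rightarrow> int \<Rightarrow> zmat set" where
  "unitary_block k M = {T \<in> block_diag k M. unitary_op T}"

end

theory Submission
  imports Defs
begin

text \<open>Cut the integers into the blocks \<open>J n = [2Ln, 2Ln + 2L)\<close> of \<open>B_0(2L)\<close> and the windows
  \<open>I n = [2Ln - L, 2Ln + L)\<close> of \<open>B_{-L}(2L)\<close>. Since \<open>prop(U) \<le> L\<close>, the compression \<open>Q n\<close> of
  \<open>U P_{I n} U*\<close> to \<open>\<ell>\<^sup>2(J n)\<close> is an orthogonal projection and \<open>Q n + Q (n+1) = 1\<close> on \<open>J n\<close>;
  comparing traces on \<open>J n \<union> J (n+1)\<close> shows that \<open>tr (Q n)\<close> does not depend on \<open>n\<close>, and at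
  \<open>n = 0\<close> it equals \<open>L - ind U = L = |J n \<inter> I n|\<close>. So each \<open>\<ell>\<^sup>2(J n)\<close> has an orthonormal basis,
  indexed by \<open>J n\<close>, whose vectors with index in \<open>J n \<inter> I n\<close> span the range of \<open>Q n\<close> and the
  others its kernel. These bases are the columns of a block unitary \<open>V \<in> B_0(2L)\<close>, and
  \<open>W = V* U\<close> maps \<open>\<ell>\<^sup>2(I n)\<close> to itself, i.e. \<open>W \<in> B_{-L}(2L)\<close>.\<close>

section \<open>Matrices of finite propagation\<close>

lemma infsum_eq_sum_vanishing_outside:
  assumes "finite F" "\<And>k. k \<notin> F \<Longrightarrow> f k = 0"
  shows "infsum f UNIV = sum f F"
proof -
  have "infsum f UNIV = infsum f F"
    by (rule infsum_cong_neutral) (use assms in auto)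
  also have "\<dots> = sum f F" using assms(1) by (rule infsum_finite)
  finally show ?thesis .
qed

lemma summable_on_vanishing_outside:
  assumes "finite F" "\<And>k. k \<notin> F \<Longrightarrow> f k = 0"
  shows "f summable_on UNIV"
  using summable_on_cong_neutral[of F UNIV f f] assms by auto

lemma summable_on_sum:
  fixes f :: "'b \<Rightarrow> 'a \<Rightarrow> real"
  assumes "finite D" "\<And>d. d \<in> D \<Longrightarrow> f d summable_on A"
  shows "(\<lambda>i. \<Sum>d\<in>D. f d i) summable_on A"
  using assms by (induction D rule: finite_induct) (auto intro: summable_on_add)

lemma infsum_sum:
  fixes f :: "'b \<Rightarrow> 'a \<Rightarrow> real"
  assumes "finite D" "\<And>d. d \<in> D \<Longrightarrow> f d summable_on A"
  shows "(\<Sum>\<^sub>\<infinity>i\<in>A. \<Sum>d\<in>D. f d i) = (\<Sum>d\<in>D. infsum (f d) A)"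
  using assms
proof (induction D rule: finite_induct)
  case (insert x F)
  then show ?case by (simp add: infsum_add summable_on_sum)
qed simp

lemma summable_on_shift_iff:
  fixes h :: "int \<Rightarrow> real"
  shows "(\<lambda>i. h (i + d)) summable_on UNIV \<longleftrightarrow> h summable_on UNIV"
  using summable_on_reindex_bij_betw[of "\<lambda>i. i + d" UNIV UNIV h]
  by (simp add: bij_betw_def inj_on_def surj_def)

lemma infsum_shift:
  fixes h :: "int \<Rightarrow> real"
  shows "(\<Sum>\<^sub>\<infinity>i. h (i + d)) = (\<Sum>\<^sub>\<infinity>i. h i)"
  using infsum_reindex_bij_betw[of "\<lambda>i. i + d" UNIV UNIV h]
  by (simp add: bij_betw_def inj_on_def surj_def)

lemma prop_le_mono: "prop_le A a \<Longrightarrow> a \<le> b \<Longrightarrow> prop_le A b"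
  unfolding prop_le_def by force

lemma prop_leD: "prop_le A a \<Longrightarrow> \<bar>i - j\<bar> > a \<Longrightarrow> A i j = 0"
  unfolding prop_le_def by force

lemma prop_le_nonneg_exists: "prop_le A a \<Longrightarrow> \<exists>a'\<ge>0. prop_le A a'"
  by (metis prop_le_mono max.cobounded1 max.cobounded2)

lemma prop_le_adj: "prop_le A a \<Longrightarrow> prop_le (adj A) a"
  unfolding prop_le_def adj_def by (metis abs_minus_commute complex_cnj_zero_iff)

lemma adj_adj [simp]: "adj (adj A) = A"
  unfolding adj_def by simp

lemma mmult_eq_sum_row:
  assumes "prop_le A a" "finite F" "{i-a..i+a} \<subseteq> F"
  shows "mmult A B i j = (\<Sum>k\<in>F. A i k * B k j)"
  unfolding mmult_def
proof (rule infsum_eq_sum_vanishing_outside[OF assms(2)])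
  fix k assume "k \<notin> F"
  with assms(3) have "k \<notin> {i-a..i+a}" by blast
  then have "\<bar>i - k\<bar> > a" by auto
  then show "A i k * B k j = 0" using prop_leD[OF assms(1)] by simp
qed

lemma mmult_eq_sum_col:
  assumes "prop_le B b" "finite F" "{j-b..j+b} \<subseteq> F"
  shows "mmult A B i j = (\<Sum>k\<in>F. A i k * B k j)"
  unfolding mmult_def
proof (rule infsum_eq_sum_vanishing_outside[OF assms(2)])
  fix k assume "k \<notin> F"
  with assms(3) have "k \<notin> {j-b..j+b}" by blast
  then have "\<bar>k - j\<bar> > b" by auto
  then show "A i k * B k j = 0" using prop_leD[OF assms(1)] by simp
qed

lemma prop_le_mmult:
  assumes "prop_le A a" "prop_le B b"
  shows "prop_le (mmult A B) (a + b)"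
  unfolding prop_le_def
proof (intro allI impI)
  fix i j assume nz: "mmult A B i j \<noteq> 0"
  have "mmult A B i j = (\<Sum>k\<in>{i-a..i+a}. A i k * B k j)"
    by (rule mmult_eq_sum_row[OF assms(1)]) auto
  with nz obtain k where "A i k * B k j \<noteq> 0" by (metis (lifting) sum.neutral)
  then have "A i k \<noteq> 0" "B k j \<noteq> 0" by auto
  then have "\<bar>i - k\<bar> \<le> a" "\<bar>k - j\<bar> \<le> b" using assms unfolding prop_le_def by auto
  then show "\<bar>i - j\<bar> \<le> a + b" by linarith
qed

lemma mmult_assoc:
  assumes A: "prop_le A a" and B: "prop_le B b" and C: "prop_le C c"
  shows "mmult (mmult A B) C = mmult A (mmult B C)"
proof -
  have assoc: "mmult (mmult A B) C = mmult A (mmult B C)"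
    if A: "prop_le A a" and B: "prop_le B b" and C: "prop_le C c" and "a \<ge> 0" "b \<ge> 0" "c \<ge> 0"
    for a b c
  proof (intro ext)
    fix i j
    define F where "F = {i - (a+b+c) .. i + (a+b+c)}"
    have fin: "finite F" unfolding F_def by simp
    have "mmult (mmult A B) C i j = (\<Sum>l\<in>F. mmult A B i l * C l j)"
      by (rule mmult_eq_sum_row[OF prop_le_mmult[OF A B] fin]) (use that in \<open>auto simp: F_def\<close>)
    also have "\<dots> = (\<Sum>l\<in>F. (\<Sum>k\<in>F. A i k * B k l) * C l j)"
      by (subst mmult_eq_sum_row[OF A fin]) (use that in \<open>auto simp: F_def\<close>)
    also have "\<dots> = (\<Sum>k\<in>F. A i k * (\<Sum>l\<in>F. B k l * C l j))"
      unfolding sum_distrib_left sum_distrib_right mult.assoc by (rule sum.swap)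
    also have "\<dots> = (\<Sum>k\<in>F. A i k * mmult B C k j)"
    proof (intro sum.cong refl)
      fix k
      show "A i k * (\<Sum>l\<in>F. B k l * C l j) = A i k * mmult B C k j"
      proof (cases "\<bar>i - k\<bar> \<le> a")
        case True
        then have "{k-b..k+b} \<subseteq> F" unfolding F_def using \<open>c \<ge> 0\<close> by auto
        then show ?thesis by (simp add: mmult_eq_sum_row[OF B fin])
      qed (simp add: prop_leD[OF A])
    qed
    also have "\<dots> = mmult A (mmult B C) i j"
      using that by (intro mmult_eq_sum_row[OF A fin, symmetric]) (auto simp: F_def)
    finally show "mmult (mmult A B) C i j = mmult A (mmult B C) i j" .
  qed
  obtain a' b' c' where "prop_le A a'" "prop_le B b'" "prop_le C c'"
    and "a' \<ge> 0" "b' \<ge> 0" "c' \<ge> 0"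
    using prop_le_nonneg_exists[OF A] prop_le_nonneg_exists[OF B] prop_le_nonneg_exists[OF C] by blast
  then show ?thesis by (rule assoc)
qed

lemma adj_mmult:
  assumes "prop_le A a"
  shows "adj (mmult A B) = mmult (adj B) (adj A)"
proof (intro ext)
  fix i j
  have "adj (mmult A B) i j = (\<Sum>k\<in>{j-a..j+a}. adj B i k * adj A k j)"
    unfolding adj_def by (subst mmult_eq_sum_row[OF assms]) (auto simp: mult.commute)
  also have "\<dots> = mmult (adj B) (adj A) i j"
    by (rule mmult_eq_sum_col[OF prop_le_adj[OF assms], symmetric]) auto
  finally show "adj (mmult A B) i j = mmult (adj B) (adj A) i j" .
qed

lemma mmult_idm_right [simp]: "mmult A idm = A"
proof (intro ext)
  fix i j
  have "mmult A idm i j = (\<Sum>k\<in>{j}. A i k * idm k j)"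
    unfolding mmult_def by (rule infsum_eq_sum_vanishing_outside) (auto simp: idm_def)
  then show "mmult A idm i j = A i j" by (simp add: idm_def)
qed

lemma mmult_idm_left [simp]: "mmult idm A = A"
proof (intro ext)
  fix i j
  have "mmult idm A i j = (\<Sum>k\<in>{i}. idm i k * A k j)"
    unfolding mmult_def by (rule infsum_eq_sum_vanishing_outside) (auto simp: idm_def)
  then show "mmult idm A i j = A i j" by (simp add: idm_def)
qed

lemma cnj_mult_self: "cnj z * z = complex_of_real ((cmod z)\<^sup>2)"
  by (metis complex_norm_square mult.commute of_real_power)

lemma isometry_column_norm:
  assumes "prop_le T K" "mmult (adj T) T = idm" "finite F" "{j-K..j+K} \<subseteq> F"
  shows "(\<Sum>k\<in>F. (cmod (T k j))\<^sup>2) = 1"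
proof -
  have "1 = mmult (adj T) T j j" using assms(2) by (simp add: idm_def)
  also have "\<dots> = (\<Sum>k\<in>F. adj T j k * T k j)"
    by (rule mmult_eq_sum_col[OF assms(1,3,4)])
  also have "\<dots> = (\<Sum>k\<in>F. complex_of_real ((cmod (T k j))\<^sup>2))"
    unfolding adj_def by (simp only: cnj_mult_self)
  finally show ?thesis by (metis of_real_eq_1_iff of_real_sum)
qed

lemma isometry_entry_bound:
  assumes "prop_le T K" "mmult (adj T) T = idm"
  shows "cmod (T i j) \<le> 1"
proof (cases "\<bar>i - j\<bar> \<le> K")
  case True
  then have "(cmod (T i j))\<^sup>2 \<le> (\<Sum>k\<in>{j-K..j+K}. (cmod (T k j))\<^sup>2)"
    by (intro member_le_sum) auto
  then show ?thesis using isometry_column_norm[OF assms] by (simp add: power_le_one_iff)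
qed (simp add: prop_leD[OF assms(1)])

lemma norm_sum_squared_le:
  fixes x :: "'a \<Rightarrow> complex"
  assumes "finite D" "\<And>d. cmod (t d) \<le> 1"
  shows "(cmod (\<Sum>d\<in>D. t d * x d))\<^sup>2 \<le> card D * (\<Sum>d\<in>D. (cmod (x d))\<^sup>2)"
proof -
  have "cmod (\<Sum>d\<in>D. t d * x d) \<le> (\<Sum>d\<in>D. cmod (x d))"
    using norm_sum[of "\<lambda>d. t d * x d" D]
      sum_mono[of D "\<lambda>d. cmod (t d * x d)" "\<lambda>d. cmod (x d)"] assms(2)
    by (simp add: norm_mult mult_left_le_one_le)
  then have "(cmod (\<Sum>d\<in>D. t d * x d))\<^sup>2 \<le> (\<Sum>d\<in>D. cmod (x d))\<^sup>2"
    by (rule power_mono) simp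
  also have "\<dots> \<le> card D * (\<Sum>d\<in>D. (cmod (x d))\<^sup>2)"
    using sum_squared_le_sum_of_squares[of "\<lambda>d. cmod (x d)" D] by (simp add: mult.commute)
  finally show ?thesis .
qed

lemma apply_mat_eq_sum_band:
  assumes "prop_le T K"
  shows "apply_mat T x i = (\<Sum>d\<in>{-K..K}. T i (i+d) * x (i+d))"
proof -
  have vanish: "T i k * x k = 0" if "k \<notin> {i-K..i+K}" for k
    using that prop_leD[OF assms, of i k] by auto
  have "apply_mat T x i = (\<Sum>k\<in>{i-K..i+K}. T i k * x k)"
    unfolding apply_mat_def by (rule infsum_eq_sum_vanishing_outside) (use vanish in auto)
  also have "\<dots> = (\<Sum>d\<in>{-K..K}. T i (i+d) * x (i+d))"
    by (rule sum.reindex_bij_witness[where i="\<lambda>d. i + d" and j="\<lambda>k. k - i"]) auto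
  finally show ?thesis .
qed

lemma bounded_op_if_prop_le:
  assumes T: "prop_le T K" and entries: "\<And>i j. cmod (T i j) \<le> 1"
  shows "bounded_op T"
proof -
  define D where "D = {-K..K}"
  define c where "c = real (card D)"
  have "(\<forall>i. (\<lambda>j. T i j * x j) summable_on UNIV) \<and>
      is_l2 (apply_mat T x) \<and> l2norm2 (apply_mat T x) \<le> (c * c) * l2norm2 x"
    if "is_l2 x" for x
  proof -
    have x: "(\<lambda>j. (cmod (x j))\<^sup>2) summable_on UNIV" using that unfolding is_l2_def .
    have rows: "(\<lambda>j. T i j * x j) summable_on UNIV" for i
    proof (rule summable_on_vanishing_outside[of "{i-K..i+K}"])
      fix k assume "k \<notin> {i-K..i+K}"
      then show "T i k * x k = 0" using prop_leD[OF T, of i k] by auto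
    qed simp
    define g where "g i = c * (\<Sum>d\<in>D. (cmod (x (i+d)))\<^sup>2)" for i
    have bound: "(cmod (apply_mat T x i))\<^sup>2 \<le> g i" for i
      unfolding apply_mat_eq_sum_band[OF T] g_def c_def D_def
      by (rule norm_sum_squared_le) (simp_all add: entries)
    have shifted: "(\<lambda>i. (cmod (x (i+d)))\<^sup>2) summable_on UNIV" for d
      using summable_on_shift_iff[of "\<lambda>j. (cmod (x j))\<^sup>2" d] x by simp
    have g: "g summable_on UNIV"
      unfolding g_def D_def by (intro summable_on_cmult_right summable_on_sum shifted) simp
    have "infsum g UNIV = c * (\<Sum>d\<in>D. l2norm2 x)"
      unfolding g_def D_def l2norm2_def
      by (simp add: infsum_cmult_right' infsum_sum shifted infsum_shift[of "\<lambda>j. (cmod (x j))\<^sup>2"])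
    then have g_sum: "infsum g UNIV = (c * c) * l2norm2 x"
      unfolding c_def by simp
    have Tx: "(\<lambda>i. (cmod (apply_mat T x i))\<^sup>2) summable_on UNIV"
      by (rule summable_on_comparison_test[OF g]) (use bound in auto)
    have "l2norm2 (apply_mat T x) \<le> infsum g UNIV"
      unfolding l2norm2_def by (rule infsum_mono[OF Tx g bound])
    then show ?thesis using rows Tx g_sum unfolding is_l2_def by simp
  qed
  then show ?thesis unfolding bounded_op_def by blast
qed

section \<open>Orthonormal bases of \<open>\<ell>\<^sup>2(D)\<close> for finite \<open>D\<close>\<close>

definition inner_on :: "int set \<Rightarrow> (int \<Rightarrow> complex) \<Rightarrow> (int \<Rightarrow> complex) \<Rightarrow> complex" where
  "inner_on D x y = (\<Sum>a\<in>D. cnj (x a) * y a)"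

definition orthonormal_on :: "int set \<Rightarrow> (int \<Rightarrow> complex) set \<Rightarrow> bool" where
  "orthonormal_on D S \<longleftrightarrow> (\<forall>f\<in>S. \<forall>g\<in>S. inner_on D f g = (if f = g then 1 else 0))"

definition proj_on :: "int set \<Rightarrow> (int \<Rightarrow> complex) set \<Rightarrow> (int \<Rightarrow> complex) \<Rightarrow> int \<Rightarrow> complex" where
  "proj_on D S y = (\<lambda>a. \<Sum>f\<in>S. f a * inner_on D f y)"

definition mat_apply_on :: "int set \<Rightarrow> zmat \<Rightarrow> (int \<Rightarrow> complex) \<Rightarrow> int \<Rightarrow> complex" where
  "mat_apply_on D R f = (\<lambda>a. \<Sum>b\<in>D. R a b * f b)"

definition projection_on :: "int set \<Rightarrow> zmat \<Rightarrow> bool" where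
  "projection_on D R \<longleftrightarrow> (\<forall>a\<in>D. \<forall>b\<in>D. R b a = cnj (R a b) \<and> (\<Sum>c\<in>D. R a c * R c b) = R a b)"

lemma projection_on_hermitian: "projection_on D R \<Longrightarrow> a \<in> D \<Longrightarrow> b \<in> D \<Longrightarrow> R b a = cnj (R a b)"
  and projection_on_idempotent:
    "projection_on D R \<Longrightarrow> a \<in> D \<Longrightarrow> b \<in> D \<Longrightarrow> (\<Sum>c\<in>D. R a c * R c b) = R a b"
  unfolding projection_on_def by blast+

lemma inner_on_commute: "inner_on D x y = cnj (inner_on D y x)"
  unfolding inner_on_def by (simp add: mult.commute)

lemma inner_on_cong:
  "(\<And>a. a \<in> D \<Longrightarrow> x a = x' a) \<Longrightarrow> (\<And>a. a \<in> D \<Longrightarrow> y a = y' a) \<Longrightarrow>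
    inner_on D x y = inner_on D x' y'"
  unfolding inner_on_def by simp

lemma inner_on_diff_right: "inner_on D h (\<lambda>a. x a - y a) = inner_on D h x - inner_on D h y"
  unfolding inner_on_def by (simp add: right_diff_distrib sum_subtractf)

lemma inner_on_self: "inner_on D w w = complex_of_real (\<Sum>a\<in>D. (cmod (w a))\<^sup>2)"
  unfolding inner_on_def by (simp add: cnj_mult_self)

lemma inner_on_self_eq_0:
  assumes "finite D" "inner_on D w w = 0" "a \<in> D"
  shows "w a = 0"
proof -
  have "(\<Sum>a\<in>D. (cmod (w a))\<^sup>2) = 0"
    using assms(2) unfolding inner_on_self by (simp only: of_real_eq_0_iff)
  then show ?thesis using assms(1,3) sum_nonneg_eq_0_iff[of D "\<lambda>a. (cmod (w a))\<^sup>2"] by auto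
qed

lemma inner_on_proj_on: "inner_on D h (proj_on D S y) = (\<Sum>g\<in>S. inner_on D h g * inner_on D g y)"
proof -
  have "inner_on D h (proj_on D S y) = (\<Sum>a\<in>D. \<Sum>g\<in>S. cnj (h a) * g a * inner_on D g y)"
    unfolding inner_on_def proj_on_def by (simp add: sum_distrib_left mult.assoc)
  also have "\<dots> = (\<Sum>g\<in>S. \<Sum>a\<in>D. cnj (h a) * g a * inner_on D g y)"
    by (rule sum.swap)
  also have "\<dots> = (\<Sum>g\<in>S. inner_on D h g * inner_on D g y)"
    unfolding inner_on_def by (simp add: sum_distrib_right)
  finally show ?thesis .
qed

lemma inner_on_proj_on_orthonormal:
  assumes "finite S" "orthonormal_on D S" "h \<in> S"
  shows "inner_on D h (proj_on D S y) = inner_on D h y"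
proof -
  have "inner_on D h (proj_on D S y) = (\<Sum>g\<in>S. if h = g then inner_on D g y else 0)"
    unfolding inner_on_proj_on using assms(2,3) unfolding orthonormal_on_def
    by (intro sum.cong refl) auto
  also have "\<dots> = inner_on D h y" using assms(1,3) by (simp add: sum.delta)
  finally show ?thesis .
qed

lemma inner_on_mat_apply_on:
  assumes "projection_on D R"
  shows "inner_on D (mat_apply_on D R f) g = inner_on D f (mat_apply_on D R g)"
proof -
  have "inner_on D (mat_apply_on D R f) g = (\<Sum>a\<in>D. \<Sum>b\<in>D. cnj (R a b) * cnj (f b) * g a)"
    unfolding inner_on_def mat_apply_on_def by (simp add: sum_distrib_right)
  also have "\<dots> = (\<Sum>a\<in>D. \<Sum>b\<in>D. R b a * cnj (f b) * g a)"
    by (intro sum.cong refl) (subst projection_on_hermitian[OF assms], auto)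
  also have "\<dots> = (\<Sum>b\<in>D. \<Sum>a\<in>D. R b a * cnj (f b) * g a)" by (rule sum.swap)
  also have "\<dots> = (\<Sum>b\<in>D. cnj (f b) * (\<Sum>a\<in>D. R b a * g a))"
    by (intro sum.cong refl) (simp add: sum_distrib_left mult_ac)
  finally show ?thesis unfolding inner_on_def mat_apply_on_def .
qed

definition in_range_on :: "int set \<Rightarrow> zmat \<Rightarrow> (int \<Rightarrow> complex) \<Rightarrow> bool" where
  "in_range_on D R f \<longleftrightarrow> (\<forall>a\<in>D. mat_apply_on D R f a = f a)"

lemma in_range_on_diff:
  "in_range_on D R x \<Longrightarrow> in_range_on D R y \<Longrightarrow> in_range_on D R (\<lambda>a. x a - y a)"
  unfolding in_range_on_def mat_apply_on_def by (simp add: right_diff_distrib sum_subtractf)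

lemma in_range_on_scale:
  "in_range_on D R x \<Longrightarrow> in_range_on D R (\<lambda>a. x a / c)"
  unfolding in_range_on_def mat_apply_on_def by (simp add: sum_divide_distrib[symmetric])

lemma in_range_on_proj_on:
  assumes "\<And>f. f \<in> S \<Longrightarrow> in_range_on D R f"
  shows "in_range_on D R (proj_on D S y)"
  unfolding in_range_on_def
proof
  fix a assume a: "a \<in> D"
  have "mat_apply_on D R (proj_on D S y) a = (\<Sum>b\<in>D. \<Sum>f\<in>S. R a b * f b * inner_on D f y)"
    unfolding mat_apply_on_def proj_on_def by (simp add: sum_distrib_left mult.assoc)
  also have "\<dots> = (\<Sum>f\<in>S. \<Sum>b\<in>D. R a b * f b * inner_on D f y)" by (rule sum.swap)
  also have "\<dots> = (\<Sum>f\<in>S. mat_apply_on D R f a * inner_on D f y)"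
    unfolding mat_apply_on_def by (simp add: sum_distrib_right)
  also have "\<dots> = proj_on D S y a"
    unfolding proj_on_def using assms a unfolding in_range_on_def by simp
  finally show "mat_apply_on D R (proj_on D S y) a = proj_on D S y a" .
qed

lemma in_range_on_column:
  assumes "projection_on D R" "c \<in> D"
  shows "in_range_on D R (\<lambda>b. R b c)"
  unfolding in_range_on_def mat_apply_on_def using projection_on_idempotent[OF assms(1) _ assms(2)] by simp

lemma proj_on_superset:
  assumes "finite S'" "orthonormal_on D S'" "S \<subseteq> S'" "\<And>a. a \<in> D \<Longrightarrow> proj_on D S y a = y a"
  shows "proj_on D S' y = proj_on D S y"
proof
  fix a
  have "finite S" using assms(1,3) by (simp add: finite_subset)
  have coeff: "inner_on D f y = (if f \<in> S then inner_on D f y else 0)" if "f \<in> S'" for f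
  proof -
    have "inner_on D f y = inner_on D f (proj_on D S y)"
      by (rule inner_on_cong) (simp_all add: assms(4))
    also have "\<dots> = (\<Sum>g\<in>S. if f = g then inner_on D g y else 0)"
      unfolding inner_on_proj_on using assms(2,3) that unfolding orthonormal_on_def
      by (intro sum.cong refl) auto
    finally show ?thesis using \<open>finite S\<close> by (simp add: sum.delta)
  qed
  have "proj_on D S' y a = (\<Sum>f\<in>S'. if f \<in> S then f a * inner_on D f y else 0)"
    unfolding proj_on_def by (intro sum.cong refl) (subst coeff, auto)
  also have "\<dots> = proj_on D S y a"
    unfolding proj_on_def using assms(1,3) by (simp add: sum.inter_restrict[symmetric] Int_absorb1)
  finally show "proj_on D S' y a = proj_on D S y a" .
qed

lemma orthonormal_on_Un:
  assumes "orthonormal_on D S" "orthonormal_on D T" "\<And>f g. f \<in> S \<Longrightarrow> g \<in> T \<Longrightarrow> inner_on D f g = 0"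
  shows "orthonormal_on D (S \<union> T)" and "S \<inter> T = {}"
proof -
  show disj: "S \<inter> T = {}"
    using assms unfolding orthonormal_on_def by fastforce
  show "orthonormal_on D (S \<union> T)"
    unfolding orthonormal_on_def
  proof (intro ballI)
    fix f g assume "f \<in> S \<union> T" "g \<in> S \<union> T"
    then show "inner_on D f g = (if f = g then 1 else 0)"
      using assms(1,2) disj assms(3)[of f g] assms(3)[of g f] inner_on_commute[of D f g]
      unfolding orthonormal_on_def by auto
  qed
qed

lemma inner_on_normalize:
  assumes "inner_on D w w \<noteq> 0"
  obtains s :: real where "s \<noteq> 0" "inner_on D w w = complex_of_real s * complex_of_real s"
    "\<And>y. inner_on D (\<lambda>a. w a / complex_of_real s) y = inner_on D w y / complex_of_real s"
    "\<And>y. inner_on D y (\<lambda>a. w a / complex_of_real s) = inner_on D y w / complex_of_real s"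
proof -
  define s where "s = sqrt (\<Sum>a\<in>D. (cmod (w a))\<^sup>2)"
  have "inner_on D w w = complex_of_real (s * s)"
    unfolding s_def inner_on_self by (simp add: sum_nonneg)
  then have ww: "inner_on D w w = complex_of_real s * complex_of_real s" by simp
  then have "s \<noteq> 0" using assms by auto
  moreover have "inner_on D (\<lambda>a. w a / complex_of_real s) y = inner_on D w y / complex_of_real s"
    and "inner_on D y (\<lambda>a. w a / complex_of_real s) = inner_on D y w / complex_of_real s" for y
    unfolding inner_on_def by (simp_all add: sum_divide_distrib)
  ultimately show ?thesis using ww that by blast
qed

lemma orthonormal_on_extend:
  assumes D: "finite D" and S: "finite S" "orthonormal_on D S" "\<And>f. f \<in> S \<Longrightarrow> in_range_on D R f"
    and x: "in_range_on D R x"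
  shows "\<exists>S'. finite S' \<and> S \<subseteq> S' \<and> orthonormal_on D S' \<and> (\<forall>f\<in>S'. in_range_on D R f) \<and>
    (\<forall>a\<in>D. proj_on D S' x a = x a)"
proof -
  define w where "w = (\<lambda>a. x a - proj_on D S x a)"
  have w_range: "in_range_on D R w"
    unfolding w_def by (intro in_range_on_diff x in_range_on_proj_on S(3))
  have w_perp: "inner_on D g w = 0" if "g \<in> S" for g
    unfolding w_def inner_on_diff_right inner_on_proj_on_orthonormal[OF S(1,2) that] by simp
  show ?thesis
  proof (cases "inner_on D w w = 0")
    case True
    then have "proj_on D S x a = x a" if "a \<in> D" for a
      using inner_on_self_eq_0[OF D True that] unfolding w_def by simp
    then show ?thesis using S by blast
  next
    case False
    then obtain s where s: "s \<noteq> 0" "inner_on D w w = complex_of_real s * complex_of_real s"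
      and inner_e: "\<And>y. inner_on D (\<lambda>a. w a / complex_of_real s) y = inner_on D w y / complex_of_real s"
        "\<And>y. inner_on D y (\<lambda>a. w a / complex_of_real s) = inner_on D y w / complex_of_real s"
      using inner_on_normalize[OF False] by blast
    define e where "e = (\<lambda>a. w a / complex_of_real s)"
    have e_perp: "inner_on D e g = 0" if "g \<in> S" for g
      using w_perp[OF that] inner_on_commute[of D e g] inner_e(2)[of g] unfolding e_def by simp
    have "orthonormal_on D {e}"
      using s inner_e(1)[of e] inner_e(2)[of w] unfolding e_def orthonormal_on_def by simp
    note eS = orthonormal_on_Un[OF this S(2), simplified, OF e_perp]
    have "inner_on D e x = inner_on D e w + inner_on D e (proj_on D S x)"
      unfolding w_def inner_on_diff_right by simp
    also have "\<dots> = complex_of_real s"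
      using s inner_e(1)[of w] e_perp unfolding inner_on_proj_on e_def by simp
    finally have ex: "inner_on D e x = complex_of_real s" .
    have "proj_on D (insert e S) x a = e a * inner_on D e x + proj_on D S x a" for a
      using S(1) eS(2) unfolding proj_on_def by simp
    then have "proj_on D (insert e S) x a = x a" for a
      unfolding ex using s(1) by (simp add: e_def w_def)
    then show ?thesis
      using S eS w_range
      by (intro exI[of _ "insert e S"]) (auto simp: e_def intro: in_range_on_scale)
  qed
qed

lemma gram_schmidt_on_range:
  assumes D: "finite D" and R: "projection_on D R" and C: "finite C" "C \<subseteq> D"
  shows "\<exists>S. finite S \<and> orthonormal_on D S \<and> (\<forall>f\<in>S. in_range_on D R f) \<and>
           (\<forall>c\<in>C. \<forall>a\<in>D. proj_on D S (\<lambda>b. R b c) a = R a c)"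
  using C
proof (induction C rule: finite_induct)
  case empty
  show ?case by (rule exI[of _ "{}"]) (simp add: orthonormal_on_def)
next
  case (insert c C)
  then obtain S where S: "finite S" "orthonormal_on D S" "\<forall>f\<in>S. in_range_on D R f"
    and proj_C: "\<forall>c'\<in>C. \<forall>a\<in>D. proj_on D S (\<lambda>b. R b c') a = R a c'" by auto
  have "c \<in> D" using insert.prems by simp
  then obtain S' where S': "finite S'" "S \<subseteq> S'" "orthonormal_on D S'" "\<forall>f\<in>S'. in_range_on D R f"
    and proj_c: "\<forall>a\<in>D. proj_on D S' (\<lambda>b. R b c) a = R a c"
    using orthonormal_on_extend[OF D S(1,2) _ in_range_on_column[OF R]] S(3) by metis
  have "proj_on D S' (\<lambda>b. R b c') a = R a c'" if "c' \<in> C" "a \<in> D" for c' a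
    using proj_on_superset[OF S'(1,3,2), of "\<lambda>b. R b c'"] proj_C that by simp
  then show ?case using S' proj_c by blast
qed

lemma projection_on_orthonormal_basis:
  assumes D: "finite D" and R: "projection_on D R"
  shows "\<exists>S. finite S \<and> orthonormal_on D S \<and> (\<forall>f\<in>S. in_range_on D R f) \<and>
           (\<forall>a\<in>D. \<forall>b\<in>D. R a b = (\<Sum>f\<in>S. f a * cnj (f b))) \<and>
           of_nat (card S) = (\<Sum>a\<in>D. R a a)"
proof -
  obtain S where S: "finite S" "orthonormal_on D S" "\<forall>f\<in>S. in_range_on D R f"
    and proj: "\<forall>c\<in>D. \<forall>a\<in>D. proj_on D S (\<lambda>b. R b c) a = R a c"
    using gram_schmidt_on_range[OF D R D subset_refl] by blast
  have coeff: "inner_on D f (\<lambda>a. R a b) = cnj (f b)" if "f \<in> S" "b \<in> D" for f b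
  proof -
    have "inner_on D f (\<lambda>a. R a b) = cnj (\<Sum>a\<in>D. R b a * f a)"
      unfolding inner_on_def
      by (simp, intro sum.cong refl) (subst projection_on_hermitian[OF R], auto simp: that)
    then show ?thesis using S(3) that unfolding in_range_on_def mat_apply_on_def by simp
  qed
  have R_eq: "R a b = (\<Sum>f\<in>S. f a * cnj (f b))" if "a \<in> D" "b \<in> D" for a b
    using proj coeff that unfolding proj_on_def by simp
  have "(\<Sum>a\<in>D. R a a) = (\<Sum>a\<in>D. \<Sum>f\<in>S. f a * cnj (f a))"
    using R_eq by simp
  also have "\<dots> = (\<Sum>f\<in>S. inner_on D f f)"
    unfolding inner_on_def by (subst sum.swap) (simp add: mult.commute)
  also have "\<dots> = of_nat (card S)"
    using S(2) unfolding orthonormal_on_def by simp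
  finally show ?thesis using S R_eq by auto
qed

lemma projection_on_complement:
  assumes "finite D" "projection_on D R"
  shows "projection_on D (\<lambda>a b. idm a b - R a b)"
  unfolding projection_on_def
proof (intro ballI conjI)
  fix a b assume ab: "a \<in> D" "b \<in> D"
  show "idm b a - R b a = cnj (idm a b - R a b)"
    using projection_on_hermitian[OF assms(2) ab] by (simp add: idm_def)
  have "(\<Sum>c\<in>D. (idm a c - R a c) * (idm c b - R c b))
      = (\<Sum>c\<in>D. (if a = c then idm c b - R c b else 0) - (if c = b then R a c else 0) + R a c * R c b)"
    by (intro sum.cong refl) (auto simp: idm_def algebra_simps)
  also have "\<dots> = idm a b - R a b - R a b + R a b"
    using ab assms(1) projection_on_idempotent[OF assms(2) ab]
    by (simp add: sum.distrib sum_subtractf)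
  finally show "(\<Sum>c\<in>D. (idm a c - R a c) * (idm c b - R c b)) = idm a b - R a b" by simp
qed

lemma in_range_on_complement_iff:
  assumes "finite D"
  shows "in_range_on D (\<lambda>a b. idm a b - R a b) g \<longleftrightarrow> (\<forall>a\<in>D. mat_apply_on D R g a = 0)"
proof -
  have "mat_apply_on D (\<lambda>a b. idm a b - R a b) g a = g a - mat_apply_on D R g a" if "a \<in> D" for a
  proof -
    have "mat_apply_on D (\<lambda>a b. idm a b - R a b) g a = (\<Sum>b\<in>D. (if a = b then g b else 0) - R a b * g b)"
      unfolding mat_apply_on_def by (intro sum.cong refl) (simp add: idm_def left_diff_distrib)
    then show ?thesis using assms that unfolding mat_apply_on_def by (simp add: sum_subtractf)
  qed
  then show ?thesis unfolding in_range_on_def by auto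
qed

lemma in_range_on_orthogonal:
  assumes "projection_on D R" "in_range_on D R f" "\<forall>a\<in>D. mat_apply_on D R g a = 0"
  shows "inner_on D f g = 0"
proof -
  have "inner_on D f g = inner_on D (mat_apply_on D R f) g"
    using assms(2) unfolding in_range_on_def by (intro inner_on_cong) auto
  also have "\<dots> = inner_on D f (mat_apply_on D R g)" by (rule inner_on_mat_apply_on[OF assms(1)])
  also have "\<dots> = 0" using assms(3) by (simp add: inner_on_def)
  finally show ?thesis .
qed

lemma orthonormal_on_bij_betw:
  assumes "bij_betw c I S" "orthonormal_on D S" "p \<in> I" "q \<in> I"
  shows "inner_on D (c p) (c q) = idm p q"
proof -
  have "c p = c q \<longleftrightarrow> p = q" using bij_betw_imp_inj_on[OF assms(1)] assms(3,4) by (auto dest: inj_onD)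
  then show ?thesis
    using assms(2) bij_betw_apply[OF assms(1,3)] bij_betw_apply[OF assms(1,4)]
    unfolding orthonormal_on_def idm_def by simp
qed

lemma bij_betw_if_split:
  assumes "A \<subseteq> D" "bij_betw f A S" "bij_betw g (D - A) T" "S \<inter> T = {}"
  shows "bij_betw (\<lambda>p. if p \<in> A then f p else g p) D (S \<union> T)"
proof -
  let ?h = "\<lambda>p. if p \<in> A then f p else g p"
  have "bij_betw ?h A S" using assms(2) bij_betw_cong[of A ?h f] by simp
  moreover have "bij_betw ?h (D - A) T" using assms(3) bij_betw_cong[of "D - A" ?h g] by simp
  ultimately have "bij_betw ?h (A \<union> (D - A)) (S \<union> T)" by (rule bij_betw_combine[OF _ _ assms(4)])
  then show ?thesis using assms(1) by (simp add: Un_absorb1)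
qed

text \<open>Indexing the basis by \<open>D\<close> itself is what lets it serve as the columns of a block of \<open>V\<close>.\<close>

definition adapted_onb :: "int set \<Rightarrow> zmat \<Rightarrow> int set \<Rightarrow> (int \<Rightarrow> int \<Rightarrow> complex) \<Rightarrow> bool" where
  "adapted_onb D R D1 c \<longleftrightarrow> (\<forall>p\<in>D. \<forall>q\<in>D. inner_on D (c p) (c q) = idm p q) \<and>
    (\<forall>a\<in>D. \<forall>b\<in>D. (\<Sum>p\<in>D. c p a * cnj (c p b)) = idm a b) \<and>
    (\<forall>p\<in>D1. in_range_on D R (c p)) \<and> (\<forall>p\<in>D - D1. \<forall>a\<in>D. mat_apply_on D R (c p) a = 0)"

lemma projection_on_adapted_onb_exists:
  assumes D: "finite D" and R: "projection_on D R"
    and D1: "D1 \<subseteq> D" "(\<Sum>a\<in>D. R a a) = of_nat (card D1)"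
  shows "\<exists>c. adapted_onb D R D1 c"
proof -
  define R' where "R' = (\<lambda>a b. idm a b - R a b)"
  have R': "projection_on D R'" unfolding R'_def by (rule projection_on_complement[OF D R])
  obtain S where S: "finite S" "orthonormal_on D S" "\<forall>f\<in>S. in_range_on D R f"
    and R_eq: "\<forall>a\<in>D. \<forall>b\<in>D. R a b = (\<Sum>f\<in>S. f a * cnj (f b))"
    and card_S: "of_nat (card S) = (\<Sum>a\<in>D. R a a)"
    using projection_on_orthonormal_basis[OF D R] by blast
  obtain T where T: "finite T" "orthonormal_on D T" "\<forall>f\<in>T. in_range_on D R' f"
    and R'_eq: "\<forall>a\<in>D. \<forall>b\<in>D. R' a b = (\<Sum>f\<in>T. f a * cnj (f b))"
    and card_T: "of_nat (card T) = (\<Sum>a\<in>D. R' a a)"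
    using projection_on_orthonormal_basis[OF D R'] by blast
  have kernel: "\<forall>a\<in>D. mat_apply_on D R g a = 0" if "g \<in> T" for g
    using T(3) that in_range_on_complement_iff[OF D] unfolding R'_def by blast
  have ST_orth: "inner_on D f g = 0" if "f \<in> S" "g \<in> T" for f g
    using in_range_on_orthogonal[OF R] S(3) kernel that by blast
  have "card S = card D1" using card_S D1(2) by (metis of_nat_eq_iff)
  then obtain \<phi> where \<phi>: "bij_betw \<phi> D1 S"
    using finite_same_card_bij[OF finite_subset[OF D1(1) D] S(1)] by metis
  have "of_nat (card T) = (of_nat (card D - card D1) :: complex)"
    using card_T D1 card_mono[OF D D1(1)] D
    by (simp add: R'_def sum_subtractf idm_def of_nat_diff)
  then have "card T = card (D - D1)" using D1(1) D by (simp add: card_Diff_subset finite_subset)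
  then obtain \<psi> where \<psi>: "bij_betw \<psi> (D - D1) T"
    using finite_same_card_bij[OF _ T(1)] D by (metis finite_Diff)
  note ST = orthonormal_on_Un[OF S(2) T(2) ST_orth]
  define c where "c p = (if p \<in> D1 then \<phi> p else \<psi> p)" for p
  have c: "bij_betw c D (S \<union> T)"
    unfolding c_def by (rule bij_betw_if_split[OF D1(1) \<phi> \<psi> ST(2)])
  have "inner_on D (c p) (c q) = idm p q" if "p \<in> D" "q \<in> D" for p q
    using orthonormal_on_bij_betw[OF c ST(1) that] .
  moreover have "(\<Sum>p\<in>D. c p a * cnj (c p b)) = idm a b" if "a \<in> D" "b \<in> D" for a b
  proof -
    have "(\<Sum>p\<in>D. c p a * cnj (c p b)) = (\<Sum>f\<in>S \<union> T. f a * cnj (f b))"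
      by (rule sum.reindex_bij_betw[OF c])
    also have "\<dots> = R a b + R' a b"
      using R_eq R'_eq that S(1) T(1) ST(2) by (simp add: sum.union_disjoint)
    finally show ?thesis unfolding R'_def by simp
  qed
  moreover have "in_range_on D R (c p)" if "p \<in> D1" for p
    using S(3) bij_betw_apply[OF \<phi> that] that unfolding c_def by simp
  moreover have "mat_apply_on D R (c p) a = 0" if "p \<in> D - D1" "a \<in> D" for p a
    using kernel bij_betw_apply[OF \<psi> that(1)] that unfolding c_def by simp
  ultimately show ?thesis unfolding adapted_onb_def by blast
qed

section \<open>Blocks, windows and the index\<close>

lemma div_eq_iff_pos:
  fixes k n M :: int
  assumes "M > 0"
  shows "k div M = n \<longleftrightarrow> M * n \<le> k \<and> k < M * n + M"
proof -
  have "k div M = n \<longleftrightarrow> (k + (-n) * M) div M = 0"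
    using div_mult_self1[of M k "-n"] assms by linarith
  also have "\<dots> \<longleftrightarrow> 0 \<le> k + (-n) * M \<and> k + (-n) * M < M"
    unfolding zdiv_eq_0_iff using assms by auto
  finally show ?thesis by (auto simp: algebra_simps)
qed

lemma infsum_eq_sum_rectangle:
  fixes N :: "int \<Rightarrow> int \<Rightarrow> real"
  assumes "finite A" "finite B" "A \<times> B \<subseteq> X" "\<And>i j. (i, j) \<in> X - A \<times> B \<Longrightarrow> N i j = 0"
  shows "(\<Sum>\<^sub>\<infinity>(i,j)\<in>X. N i j) = (\<Sum>i\<in>A. \<Sum>j\<in>B. N i j)"
proof -
  have "(\<Sum>\<^sub>\<infinity>(i,j)\<in>X. N i j) = (\<Sum>\<^sub>\<infinity>(i,j)\<in>A \<times> B. N i j)"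
    by (rule infsum_cong_neutral) (use assms(3,4) in auto)
  also have "\<dots> = (\<Sum>i\<in>A. \<Sum>j\<in>B. N i j)"
    using assms(1,2) by (simp add: sum.cartesian_product)
  finally show ?thesis .
qed

lemma ind_eq_corner_sums:
  assumes "prop_le U L"
  shows "ind U = (\<Sum>i\<in>{-L..<0}. \<Sum>j\<in>{0..<L}. (cmod (U i j))\<^sup>2)
               - (\<Sum>i\<in>{0..<L}. \<Sum>j\<in>{-L..<0}. (cmod (U i j))\<^sup>2)"
  unfolding ind_def
proof (intro arg_cong2[where f=minus] infsum_eq_sum_rectangle)
  fix i j
  show "(i, j) \<in> {(i, j). i < 0 \<and> 0 \<le> j} - {-L..<0} \<times> {0..<L} \<Longrightarrow> (cmod (U i j))\<^sup>2 = 0"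
    and "(i, j) \<in> {(i, j). 0 \<le> i \<and> j < 0} - {0..<L} \<times> {-L..<0} \<Longrightarrow> (cmod (U i j))\<^sup>2 = 0"
    using prop_leD[OF assms, of i j] by auto
qed auto

lemma sum_int_interval_split:
  fixes a b c :: int
  assumes "a \<le> b" "b \<le> c"
  shows "sum f {a..<c} = sum f {a..<b} + sum f {b..<c}"
proof -
  have "{a..<c} = {a..<b} \<union> {b..<c}" using assms by auto
  then show ?thesis by (simp add: sum.union_disjoint)
qed

locale banded_unitary =
  fixes U :: zmat and L :: int
  assumes L_pos: "L \<ge> 1" and prop_U: "prop_le U L"
    and U_adj: "mmult U (adj U) = idm" and adj_U: "mmult (adj U) U = idm"
begin

definition block :: "int \<Rightarrow> int set" where
  "block n = {2*L*n ..< 2*L*n + 2*L}"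

definition window :: "int \<Rightarrow> int set" where
  "window n = {2*L*n - L ..< 2*L*n + L}"

text \<open>\<open>window_proj n\<close> is the matrix of \<open>U P U\<^sup>*\<close>, \<open>P\<close> the coordinate projection onto \<open>window n\<close>.\<close>

definition window_proj :: "int \<Rightarrow> zmat" where
  "window_proj n a b = (\<Sum>k\<in>window n. U a k * cnj (U b k))"

lemma finite_block [simp]: "finite (block n)"
  and finite_window [simp]: "finite (window n)"
  unfolding block_def window_def by simp_all

lemma card_block: "card (block n) = nat (2*L)"
  and card_window: "card (window n) = nat (2*L)"
  unfolding block_def window_def by simp_all

lemma block_iff: "k \<in> block n \<longleftrightarrow> k div (2*L) = n"
  unfolding block_def using div_eq_iff_pos[of "2*L" k n] L_pos by auto

lemma U_vanishes: "\<bar>a - b\<bar> > L \<Longrightarrow> U a b = 0"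
  by (rule prop_leD[OF prop_U])

lemma rows_orthonormal:
  assumes "finite F" "{i-L..i+L} \<subseteq> F"
  shows "(\<Sum>k\<in>F. U i k * cnj (U j k)) = idm i j"
  using mmult_eq_sum_row[OF prop_U assms, of "adj U" j] U_adj by (simp add: adj_def)

lemma columns_orthonormal:
  assumes "finite F" "{i-L..i+L} \<subseteq> F"
  shows "(\<Sum>k\<in>F. cnj (U k i) * U k j) = idm i j"
  using mmult_eq_sum_row[OF prop_le_adj[OF prop_U] assms, of U j] adj_U by (simp add: adj_def)

lemma column_norm:
  assumes "finite F" "{j-L..j+L} \<subseteq> F"
  shows "(\<Sum>k\<in>F. (cmod (U k j))\<^sup>2) = 1"
  by (rule isometry_column_norm[OF prop_U adj_U assms])

lemma window_proj_hermitian: "window_proj n b a = cnj (window_proj n a b)"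
  unfolding window_proj_def by (simp add: mult.commute)

text \<open>The windows of consecutive blocks tile a neighbourhood of radius \<open>L\<close> of a block.\<close>

lemma window_proj_add_succ:
  assumes "a \<in> block n"
  shows "window_proj n a c + window_proj (n+1) a c = idm a c"
proof -
  have "window n \<inter> window (n+1) = {}"
    unfolding window_def using L_pos by (auto simp: algebra_simps)
  then have "window_proj n a c + window_proj (n+1) a c
      = (\<Sum>k\<in>window n \<union> window (n+1). U a k * cnj (U c k))"
    unfolding window_proj_def by (simp add: sum.union_disjoint)
  also have "\<dots> = idm a c"
    by (rule rows_orthonormal)
      (use assms L_pos in \<open>auto simp: block_def window_def algebra_simps\<close>)
  finally show ?thesis .
qed

lemma window_proj_outside_block:
  assumes "a \<in> block n" "c \<notin> block n"
  shows "window_proj n a c = 0" "window_proj n c a = 0"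
proof -
  show "window_proj n a c = 0"
  proof (cases "c < 2*L*n")
    case True
    have "window_proj (n+1) a c = 0"
      unfolding window_proj_def using True L_pos
      by (intro sum.neutral ballI) (auto simp: window_def algebra_simps intro!: U_vanishes)
    moreover have "idm a c = 0" using assms(1) True unfolding idm_def block_def by auto
    ultimately show ?thesis using window_proj_add_succ[OF assms(1), of c] by simp
  next
    case False
    then have "c \<ge> 2*L*n + 2*L" using assms(2) unfolding block_def by auto
    then show ?thesis
      unfolding window_proj_def using L_pos
      by (intro sum.neutral ballI) (auto simp: window_def algebra_simps intro!: U_vanishes)
  qed
  then show "window_proj n c a = 0"
    using window_proj_hermitian by (metis complex_cnj_zero)
qed

lemma window_proj_apply_column:
  assumes "b \<in> block n"
  shows "mat_apply_on (block n) (window_proj n) (\<lambda>k. U k j) b = (if j \<in> window n then U b j else 0)"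
proof -
  define F where "F = {2*L*n - 2*L ..< 2*L*n + 2*L}"
  have F: "finite F" "block n \<subseteq> F" unfolding F_def block_def using L_pos by auto
  have "mat_apply_on (block n) (window_proj n) (\<lambda>k. U k j) b = (\<Sum>a\<in>F. window_proj n b a * U a j)"
    unfolding mat_apply_on_def
    by (rule sum.mono_neutral_left[OF F]) (use window_proj_outside_block[OF assms] in auto)
  also have "\<dots> = (\<Sum>k\<in>window n. U b k * (\<Sum>a\<in>F. cnj (U a k) * U a j))"
    unfolding window_proj_def sum_distrib_left sum_distrib_right mult.assoc by (rule sum.swap)
  also have "\<dots> = (\<Sum>k\<in>window n. U b k * idm k j)"
    by (intro sum.cong refl arg_cong2[where f=times] columns_orthonormal F(1))
      (use L_pos in \<open>auto simp: F_def window_def\<close>)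
  finally show ?thesis unfolding idm_def by (simp add: if_distrib cong: if_cong)
qed

lemma column_in_range: "j \<in> window n \<Longrightarrow> in_range_on (block n) (window_proj n) (\<lambda>k. U k j)"
  and column_in_kernel:
    "j \<notin> window n \<Longrightarrow> \<forall>b\<in>block n. mat_apply_on (block n) (window_proj n) (\<lambda>k. U k j) b = 0"
  using window_proj_apply_column unfolding in_range_on_def by simp_all

lemma projection_on_window_proj: "projection_on (block n) (window_proj n)"
  unfolding projection_on_def
proof (intro ballI conjI)
  fix a b assume a: "a \<in> block n" and b: "b \<in> block n"
  show "window_proj n b a = cnj (window_proj n a b)" by (rule window_proj_hermitian)
  have "(\<Sum>c\<in>block n. window_proj n a c * window_proj n c b)
      = (\<Sum>k\<in>window n. mat_apply_on (block n) (window_proj n) (\<lambda>c. U c k) a * cnj (U b k))"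
    unfolding window_proj_def[of n _ b] mat_apply_on_def sum_distrib_left sum_distrib_right mult.assoc
    by (rule sum.swap)
  also have "\<dots> = window_proj n a b"
    unfolding window_proj_apply_column[OF a] window_proj_def by simp
  finally show "(\<Sum>c\<in>block n. window_proj n a c * window_proj n c b) = window_proj n a b" .
qed

definition window_trace :: "int \<Rightarrow> complex" where
  "window_trace n = (\<Sum>a\<in>block n. window_proj n a a)"

lemma window_trace_succ: "window_trace (n+1) = window_trace n"
proof -
  let ?cross = "\<Sum>c\<in>block n. window_proj (n+1) c c"
  have "window_trace n + ?cross = of_nat (nat (2*L))"
    using window_proj_add_succ[of _ n] card_block[of n]
    by (simp add: window_trace_def sum.distrib[symmetric] idm_def)
  moreover have "?cross + window_trace (n+1) = of_nat (nat (2*L))"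
  proof -
    have disj: "block n \<inter> block (n+1) = {}"
      unfolding block_def using L_pos by (auto simp: algebra_simps)
    have "?cross + window_trace (n+1)
        = (\<Sum>c\<in>block n \<union> block (n+1). \<Sum>k\<in>window (n+1). U c k * cnj (U c k))"
      unfolding window_trace_def window_proj_def by (simp add: sum.union_disjoint[OF _ _ disj])
    also have "\<dots> = (\<Sum>k\<in>window (n+1).
        complex_of_real (\<Sum>c\<in>block n \<union> block (n+1). (cmod (U c k))\<^sup>2))"
      by (subst sum.swap) (simp only: complex_norm_square of_real_sum)
    also have "\<dots> = (\<Sum>k\<in>window (n+1). 1)"
    proof (intro sum.cong refl)
      fix k assume "k \<in> window (n+1)"
      then have "{k-L..k+L} \<subseteq> block n \<union> block (n+1)"
        using L_pos by (auto simp: block_def window_def algebra_simps)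
      from column_norm[OF _ this]
      show "complex_of_real (\<Sum>c\<in>block n \<union> block (n+1). (cmod (U c k))\<^sup>2) = 1" by simp
    qed
    finally show ?thesis using card_window[of "n+1"] by simp
  qed
  ultimately show ?thesis by (metis add.commute add_left_cancel)
qed

lemma window_trace_const: "window_trace n = window_trace 0"
proof (induction n rule: int_induct[where k=0])
  case (step1 i) then show ?case using window_trace_succ[of i] by simp
next
  case (step2 i) then show ?case using window_trace_succ[of "i - 1"] by simp
qed simp

lemma window_trace_0: "window_trace 0 = complex_of_real (of_int L - ind U)"
proof -
  define N where "N a k = (cmod (U a k))\<^sup>2" for a k
  have L0: "0 \<le> L" "L \<le> 2*L" using L_pos by simp_all
  have "window_trace 0 = (\<Sum>a\<in>{0..<2*L}. \<Sum>k\<in>{-L..<L}. complex_of_real (N a k))"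
    unfolding window_trace_def window_proj_def block_def window_def N_def
    by (simp del: of_real_power add: complex_norm_square)
  also have "\<dots> = complex_of_real ((\<Sum>a\<in>{0..<2*L}. \<Sum>k\<in>{-L..<0}. N a k)
      + (\<Sum>a\<in>{0..<2*L}. \<Sum>k\<in>{0..<L}. N a k))"
    using L0 by (simp only: of_real_sum of_real_add sum_int_interval_split[of "-L" 0 L] sum.distrib)
  also have "(\<Sum>a\<in>{0..<2*L}. \<Sum>k\<in>{-L..<0}. N a k) = (\<Sum>a\<in>{0..<L}. \<Sum>k\<in>{-L..<0}. N a k)"
  proof -
    have "N a k = 0" if "a \<in> {L..<2*L}" "k \<in> {-L..<0}" for a k
      unfolding N_def using that U_vanishes[of a k] by auto
    then show ?thesis using L0 by (simp add: sum_int_interval_split[of 0 L "2*L"])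
  qed
  also have "(\<Sum>a\<in>{0..<2*L}. \<Sum>k\<in>{0..<L}. N a k) = (\<Sum>k\<in>{0..<L}. \<Sum>a\<in>{0..<2*L}. N a k)"
    by (rule sum.swap)
  also have "\<dots> = (\<Sum>k\<in>{0..<L}. 1 - (\<Sum>a\<in>{-L..<0}. N a k))"
  proof (intro sum.cong refl)
    fix k assume "k \<in> {0..<L}"
    then have "(\<Sum>a\<in>{-L..<2*L}. N a k) = 1" unfolding N_def by (intro column_norm) auto
    then show "(\<Sum>a\<in>{0..<2*L}. N a k) = 1 - (\<Sum>a\<in>{-L..<0}. N a k)"
      using L_pos sum_int_interval_split[of "-L" 0 "2*L" "\<lambda>a. N a k"] by simp
  qed
  also have "\<dots> = of_int L - (\<Sum>a\<in>{-L..<0}. \<Sum>k\<in>{0..<L}. N a k)"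
    using L0 by (simp add: sum_subtractf sum.swap[of _ "{0..<L}" "{-L..<0}"])
  finally show ?thesis using ind_eq_corner_sums[OF prop_U] unfolding N_def by simp
qed

end

section \<open>The factorisation\<close>

locale banded_unitary_index_zero = banded_unitary +
  assumes ind_U: "ind U = 0"
begin

lemma trace_window_proj_eq_card: "(\<Sum>a\<in>block n. window_proj n a a) = of_nat (card (block n \<inter> window n))"
proof -
  have "block n \<inter> window n = {2*L*n ..< 2*L*n + L}"
    using L_pos by (auto simp: block_def window_def)
  then have "card (block n \<inter> window n) = nat L" by simp
  then show ?thesis
    using window_trace_const[of n] window_trace_0 ind_U L_pos by (simp add: window_trace_def)
qed

definition basis :: "int \<Rightarrow> int \<Rightarrow> int \<Rightarrow> complex" where
  "basis n = (SOME c. adapted_onb (block n) (window_proj n) (block n \<inter> window n) c)"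

lemma adapted_onb_basis: "adapted_onb (block n) (window_proj n) (block n \<inter> window n) (basis n)"
  unfolding basis_def
  by (rule someI_ex[OF projection_on_adapted_onb_exists])
    (simp_all add: projection_on_window_proj trace_window_proj_eq_card)

lemma basis_orthonormal: "p \<in> block n \<Longrightarrow> q \<in> block n \<Longrightarrow> inner_on (block n) (basis n p) (basis n q) = idm p q"
  and basis_complete:
    "a \<in> block n \<Longrightarrow> b \<in> block n \<Longrightarrow> (\<Sum>p\<in>block n. basis n p a * cnj (basis n p b)) = idm a b"
  and basis_range: "p \<in> block n \<inter> window n \<Longrightarrow> in_range_on (block n) (window_proj n) (basis n p)"
  and basis_kernel: "p \<in> block n - window n \<Longrightarrow> a \<in> block n \<Longrightarrow> mat_apply_on (block n) (window_proj n) (basis n p) a = 0"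
  using adapted_onb_basis[of n] unfolding adapted_onb_def by auto

definition V :: zmat where
  "V i j = (if i div (2*L) = j div (2*L) then basis (j div (2*L)) j i else 0)"

definition W :: zmat where
  "W = mmult (adj V) U"

lemma V_same_block: "i \<in> block n \<Longrightarrow> j \<in> block n \<Longrightarrow> V i j = basis n j i"
  and V_other_block: "i \<in> block n \<Longrightarrow> j \<notin> block n \<Longrightarrow> V i j = 0 \<and> V j i = 0"
  unfolding V_def block_iff by auto

lemma in_block_div: "i \<in> block (i div (2*L))"
  by (simp add: block_iff)

lemma V_block_diag: "V i j \<noteq> 0 \<Longrightarrow> \<exists>n. i \<in> block n \<and> j \<in> block n"
  using V_other_block in_block_div by blast

lemma prop_V: "prop_le V (2*L)"
  unfolding prop_le_def using V_block_diag by (fastforce simp: block_def)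

lemma V_adj: "mmult V (adj V) = idm"
proof (intro ext)
  fix i j
  define n where "n = i div (2*L)"
  have i: "i \<in> block n" unfolding n_def by (rule in_block_div)
  have "mmult V (adj V) i j = (\<Sum>k\<in>block n. V i k * cnj (V j k))"
    unfolding mmult_def adj_def
    by (rule infsum_eq_sum_vanishing_outside) (use V_other_block[OF i] in auto)
  also have "\<dots> = idm i j"
  proof (cases "j \<in> block n")
    case True
    then show ?thesis using i by (simp add: V_same_block basis_complete)
  next
    case False
    then show ?thesis using i V_other_block[OF _ False] by (auto simp: idm_def)
  qed
  finally show "mmult V (adj V) i j = idm i j" .
qed

lemma adj_V: "mmult (adj V) V = idm"
proof (intro ext)
  fix i j
  define n where "n = i div (2*L)"
  have i: "i \<in> block n" unfolding n_def by (rule in_block_div)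
  have "mmult (adj V) V i j = (\<Sum>k\<in>block n. cnj (V k i) * V k j)"
    unfolding mmult_def adj_def
    by (rule infsum_eq_sum_vanishing_outside) (use V_other_block[OF i] in auto)
  also have "\<dots> = idm i j"
  proof (cases "j \<in> block n")
    case True
    then show ?thesis
      using i basis_orthonormal[OF i True] by (simp add: V_same_block inner_on_def)
  next
    case False
    then show ?thesis using i V_other_block[OF _ False] by (auto simp: idm_def)
  qed
  finally show "mmult (adj V) V i j = idm i j" .
qed

lemma W_eq_inner_on:
  assumes "i \<in> block n"
  shows "W i j = inner_on (block n) (basis n i) (\<lambda>k. U k j)"
proof -
  have "W i j = (\<Sum>k\<in>block n. cnj (V k i) * U k j)"
    unfolding W_def mmult_def adj_def
    by (rule infsum_eq_sum_vanishing_outside) (use V_other_block[OF assms] in auto)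
  then show ?thesis unfolding inner_on_def using assms by (simp add: V_same_block)
qed

lemma W_head_row:
  assumes i: "i \<in> block n \<inter> window n" and nz: "W i j \<noteq> 0"
  shows "j \<in> window n"
proof (rule ccontr)
  assume "j \<notin> window n"
  then have "inner_on (block n) (basis n i) (\<lambda>k. U k j) = 0"
    using in_range_on_orthogonal[OF projection_on_window_proj basis_range[OF i]] column_in_kernel
    by blast
  with nz W_eq_inner_on i show False by auto
qed

lemma W_tail_row:
  assumes i: "i \<in> block n - window n" and nz: "W i j \<noteq> 0"
  shows "j \<in> window (n+1)"
proof (rule ccontr)
  assume j: "j \<notin> window (n+1)"
  have "inner_on (block n) (basis n i) (\<lambda>k. U k j) = 0"
  proof (cases "j \<in> window n")
    case True
    have "inner_on (block n) (\<lambda>k. U k j) (basis n i) = 0"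
      using in_range_on_orthogonal[OF projection_on_window_proj column_in_range[OF True]]
        basis_kernel[OF i] by blast
    then show ?thesis using inner_on_commute[of "block n" "\<lambda>k. U k j"] by simp
  next
    case False
    have "U b j = 0" if "b \<in> block n" for b
      using that i j False L_pos by (intro U_vanishes) (auto simp: block_def window_def algebra_simps)
    then show ?thesis by (simp add: inner_on_def)
  qed
  with nz W_eq_inner_on i show False by auto
qed

lemma W_window_diag:
  assumes "W i j \<noteq> 0"
  shows "\<exists>m. i \<in> window m \<and> j \<in> window m"
proof -
  define n where "n = i div (2*L)"
  have i: "i \<in> block n" unfolding n_def by (rule in_block_div)
  show ?thesis
  proof (cases "i \<in> window n")
    case True
    then show ?thesis using W_head_row[OF _ assms] i by blast
  next
    case False
    then have "i \<in> window (n+1)" using i by (auto simp: block_def window_def algebra_simps)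
    then show ?thesis using W_tail_row[OF _ assms] i False by blast
  qed
qed

lemma prop_W: "prop_le W (3*L)"
  using prop_le_mmult[OF prop_le_adj[OF prop_V] prop_U] unfolding W_def by simp

lemma adj_W_eq: "adj W = mmult (adj U) V"
  unfolding W_def using adj_mmult[OF prop_le_adj[OF prop_V], of U] by simp

lemma W_adj: "mmult W (adj W) = idm"
proof -
  have "mmult W (adj W) = mmult (adj V) (mmult U (mmult (adj U) V))"
    unfolding adj_W_eq unfolding W_def
    by (rule mmult_assoc[OF prop_le_adj[OF prop_V] prop_U prop_le_mmult[OF prop_le_adj[OF prop_U] prop_V]])
  also have "mmult U (mmult (adj U) V) = mmult (mmult U (adj U)) V"
    by (rule mmult_assoc[OF prop_U prop_le_adj[OF prop_U] prop_V, symmetric])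
  finally show ?thesis using U_adj adj_V by simp
qed

lemma adj_W: "mmult (adj W) W = idm"
proof -
  have "mmult (adj W) W = mmult (adj U) (mmult V (mmult (adj V) U))"
    unfolding adj_W_eq unfolding W_def
    by (rule mmult_assoc[OF prop_le_adj[OF prop_U] prop_V prop_le_mmult[OF prop_le_adj[OF prop_V] prop_U]])
  also have "mmult V (mmult (adj V) U) = mmult (mmult V (adj V)) U"
    by (rule mmult_assoc[OF prop_V prop_le_adj[OF prop_V] prop_U, symmetric])
  finally show ?thesis using adj_U V_adj by simp
qed

lemma U_eq_mmult_V_W: "U = mmult V W"
  unfolding W_def using V_adj mmult_assoc[OF prop_V prop_le_adj[OF prop_V] prop_U] by simp

lemma V_unitary_block: "V \<in> unitary_block 0 (2*L)"
proof -
  have "bounded_op V"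
    using bounded_op_if_prop_le[OF prop_V isometry_entry_bound[OF prop_V adj_V]] .
  moreover have "\<exists>n. 0 + n*(2*L) \<le> i \<and> i < 0 + (n+1)*(2*L) \<and> 0 + n*(2*L) \<le> j \<and> j < 0 + (n+1)*(2*L)"
    if "V i j \<noteq> 0" for i j
    using V_block_diag[OF that] by (auto simp: block_def algebra_simps)
  ultimately show ?thesis
    unfolding unitary_block_def block_diag_def unitary_op_def using V_adj adj_V by blast
qed

lemma W_unitary_block: "W \<in> unitary_block (-L) (2*L)"
proof -
  have "bounded_op W"
    using bounded_op_if_prop_le[OF prop_W isometry_entry_bound[OF prop_W adj_W]] .
  moreover have "\<exists>m. -L + m*(2*L) \<le> i \<and> i < -L + (m+1)*(2*L) \<and> -L + m*(2*L) \<le> j \<and> j < -L + (m+1)*(2*L)"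
    if "W i j \<noteq> 0" for i j
    using W_window_diag[OF that] by (auto simp: window_def algebra_simps)
  ultimately show ?thesis
    unfolding unitary_block_def block_diag_def unitary_op_def using W_adj adj_W by blast
qed

end

theorem theorem2p8:
  fixes U :: zmat and L :: int
  assumes "L \<ge> 1" and "U \<in> fp_unitaries" and "ind U = 0" and "prop_le U L"
  shows "\<exists>V W. V \<in> unitary_block 0 (2*L) \<and> W \<in> unitary_block (-L) (2*L) \<and> U = mmult V W"
proof -
  have "mmult U (adj U) = idm" "mmult (adj U) U = idm"
    using assms(2) unfolding fp_unitaries_def unitary_op_def by auto
  then interpret banded_unitary_index_zero U L
    using assms by unfold_locales
  show ?thesis using V_unitary_block W_unitary_block U_eq_mmult_V_W by blast
qed

end
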